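(* Let $m$ be a positive integer, $n=2m$, let $r$ be a positive divisor of $2^m+1$, $s$ an integer, $a\in\mathbb{F}_{2^n}^*$, and define $f:\mathbb{F}_{2^n}\to\mathbb{F}_2$ by $f(0)=0$ and $$f(x)=\sum_{i=1}^{\frac{2^m+1}{r}-1}{\rm Tr}_1^n\big(ax^{(ri+s)(2^m-1)}\big).$$ (1) If $\gcd(s,2^m+1)=1$ and $a=\overline{a}\xi^k$ with $\overline{a}\in\mathbb{F}_{2^m}^*$ and $0\le k\le 2^m$, then $f$ is bent if and only if $$K_m(\overline{a})=r-\sum_{x\in U,\,x^r=1}(-1)^{{\rm Tr}_1^n(ax)}.$$ (2) If $\gcd(s,2^m+1)=d$ and $a=\overline{a}\xi^{kd}$ with $\overline{a}\in\mathbb{F}_{2^m}^*$ and $0\le k<\frac{2^m+1}{d}$, then $f$ is bent if and only if $$d\,S_0(\overline{a})=\sum_{x\in U,\,x^r=1}(-1)^{{\rm Tr}_1^n(ax^s)}+1-r,$$ where $S_0(\overline{a})=\sum_{x\in V_0}(-1)^{{\rm Tr}_1^n(\overline{a}x)}$ and $V_0=\{\xi^{dj}:0\le j<\frac{2^m+1}{d}\}$.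
   Context: ${\rm Tr}_k^t$ is the trace map from $\mathbb{F}_{2^t}$ to $\mathbb{F}_{2^k}$. $U=\{x\in\mathbb{F}_{2^n}:x^{2^m+1}=1\}$ and $\xi$ is a fixed generator of $U$. $K_m(\beta)=\sum_{x\in\mathbb{F}_{2^m}}(-1)^{{\rm Tr}_1^m(\beta x+x^{2^m-2})}$. A function $f:\mathbb{F}_{2^n}\to\mathbb{F}_2$ is bent if $|W_f(\lambda)|^2=2^n$ for all $\lambda$, where $W_f(\lambda)=\sum_{x}(-1)^{f(x)+{\rm Tr}_1^n(\lambda x)}$. *)

theory Defs
  imports Complex_Main
begin

text \<open>Absolute trace Tr_1^t (values in the prime field {0,1} when the argument lies in F_{2^t}).\<close>
definition tr :: "nat \<Rightarrow> 'a::field \<Rightarrow> 'a" where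
  "tr t x = (\<Sum>i<t. x ^ (2 ^ i))"

text \<open>Additive character: (-1)^y for y in F_2 (embedded as 0/1 in the field).\<close>
definition chi :: "'a::field \<Rightarrow> int" where
  "chi y = (if y = 0 then 1 else -1)"

definition subF :: "nat \<Rightarrow> 'a::field set" where
  "subF m = {x. x ^ (2 ^ m) = x}"

definition unitU :: "nat \<Rightarrow> 'a::field set" where
  "unitU m = {x. x ^ (2 ^ m + 1) = 1}"

text \<open>Kloosterman sum K_m(beta); x^(2^m-2) is the inversion map (0 maps to 0).\<close>
definition kloosterman :: "nat \<Rightarrow> 'a::{field,finite} \<Rightarrow> int" where
  "kloosterman m \<beta> = (\<Sum>x\<in>subF m. chi (tr m (\<beta> * x + inverse x)))"

definition walsh :: "nat \<Rightarrow> ('a::{field,finite} \<Rightarrow> 'a) \<Rightarrow> 'a \<Rightarrow> int" where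
  "walsh n f lam = (\<Sum>x\<in>UNIV. chi (f x + tr n (lam * x)))"

definition bent :: "nat \<Rightarrow> ('a::{field,finite} \<Rightarrow> 'a) \<Rightarrow> bool" where
  "bent n f \<longleftrightarrow> (\<forall>lam. \<bar>walsh n f lam\<bar> ^ 2 = 2 ^ n)"

definition fun_f :: "nat \<Rightarrow> nat \<Rightarrow> int \<Rightarrow> 'a::field \<Rightarrow> 'a \<Rightarrow> 'a" where
  "fun_f m r s a x = (if x = 0 then 0 else
     (\<Sum>i=1..(2 ^ m + 1) div r - 1.
        tr (2 * m) (a * x powi ((int r * int i + s) * (2 ^ m - 1)))))"

end

(*
  Write q = 2^m and chi(z) = (-1)^Tr(z). Every nonzero x factors uniquely as x = y u with
  y in the subfield F_q and u in the circle U of (q+1)-st roots of unity. The exponents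
  (r i + s)(q - 1) annihilate F_q^*, so f is constant on the lines F_q^* u; summing a Walsh
  coefficient along these lines leaves a character sum over F_q^* equal to q - 1 or -1
  according to whether lambda u lies in F_q, and f turns out to be bent iff
  sum_{u in U} (-1)^f(u) = 1. As u -> u^(q-1) permutes U and f(u) is a geometric sum in
  u^((q-1) r) that vanishes exactly on the r-th roots of unity, bentness amounts to
  sum_{x in U} chi(a x^s) = sum_{x in U, x^r = 1} chi(a x^s) + 1 - r.
  If gcd(s, q+1) = 1 then x -> x^s permutes U, and the substitution t = u + 1/u, which is
  two-to-one onto the t in F_q^* with Tr(1/t) = 1, turns sum_{u in U} chi(ab u) into
  1 - K_m(ab); this gives (1). In general x -> x^s covers the subgroup of d-th powers
  d times, which gives (2).
*)

theory Submission
  imports Defs "HOL-Computational_Algebra.Polynomial" "HOL-Number_Theory.Cong"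
begin

lemma sum_lessThan_add:
  fixes n k :: nat
  shows "(\<Sum>i<n + k. f i) = (\<Sum>i<n. f i) + (\<Sum>i<k. (f (n + i) :: 'b::comm_monoid_add))"
proof -
  have "sum f {0..<n + k} = sum f {0..<n} + sum f {n..<n + k}"
    by (rule sum.atLeastLessThan_concat[symmetric]) auto
  moreover have "sum f {n..<n + k} = (\<Sum>i\<in>{0..<k}. f (i + n))"
    using sum.shift_bounds_nat_ivl[of f 0 n k] by (simp add: add.commute)
  ultimately show ?thesis
    by (simp add: atLeast0LessThan add.commute)
qed

lemma sum_lessThan_mult_mod:
  fixes k :: nat
  shows "(\<Sum>j<n * k. g (j mod k)) = of_nat n * (\<Sum>i<k. (g i :: 'b::semiring_1))"
proof -
  have "(\<Sum>j\<in>{l * k..<l * k + k}. g (j mod k)) = (\<Sum>i<k. g i)" for l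
  proof -
    have "(\<Sum>j\<in>{l * k..<l * k + k}. g (j mod k)) = (\<Sum>i\<in>{0..<k}. g ((i + l * k) mod k))"
      using sum.shift_bounds_nat_ivl[of "\<lambda>j. g (j mod k)" 0 "l * k" k] by (simp add: add.commute)
    thus ?thesis
      by (simp add: atLeast0LessThan)
  qed
  thus ?thesis
    using sum.nat_group[of "\<lambda>j. g (j mod k)" k n] by simp
qed

lemma sum_affine_mod:
  fixes k s :: int
  assumes "coprime s (int N)"
  shows "(\<Sum>j<d * N. H (nat ((k + int j * s) mod int N))) = of_nat d * (\<Sum>i<N. (H i :: 'b::semiring_1))"
proof -
  define \<phi> where "\<phi> j = nat ((k + int j * s) mod int N)" for j
  have "[k + int j * s = k + int (j mod N) * s] (mod int N)" for j
    by (intro cong_add cong_mult cong_refl) (simp add: cong_def of_nat_mod)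
  hence "\<phi> j = \<phi> (j mod N)" for j
    by (simp add: \<phi>_def cong_def)
  hence periodic: "(\<Sum>j<d * N. H (\<phi> j)) = of_nat d * (\<Sum>i<N. H (\<phi> i))"
    using sum_lessThan_mult_mod[where g = "\<lambda>i. H (\<phi> i)" and n = d and k = N] by simp
  have "inj_on \<phi> {..<N}"
  proof (rule inj_onI)
    fix i j assume "i \<in> {..<N}" "j \<in> {..<N}" "\<phi> i = \<phi> j"
    hence "[k + int i * s = k + int j * s] (mod int N)"
      by (simp add: \<phi>_def cong_def eq_nat_nat_iff)
    hence "[int i = int j] (mod int N)"
      using assms by (simp add: cong_add_lcancel cong_mult_rcancel)
    thus "i = j"
      using \<open>i \<in> {..<N}\<close> \<open>j \<in> {..<N}\<close> by (simp add: cong_int_iff cong_less_modulus_unique_nat)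
  qed
  moreover have "\<phi> ` {..<N} \<subseteq> {..<N}"
    by (auto simp: \<phi>_def nat_less_iff)
  ultimately have "bij_betw \<phi> {..<N} {..<N}"
    by (simp add: bij_betw_def endo_inj_surj)
  hence "(\<Sum>i<N. H (\<phi> i)) = (\<Sum>i<N. H i)"
    by (rule sum.reindex_bij_betw)
  thus ?thesis
    using periodic by (simp add: \<phi>_def)
qed

lemma gcd_coprime_decomposition:
  fixes s :: int
  assumes "M > 0" "d = nat (gcd s (int M))"
  obtains s' where "M = d * (M div d)" "s = int d * s'" "coprime s' (int (M div d))"
proof -
  have "gcd s (int M) > 0"
    using assms(1) by simp
  hence dg: "int d = gcd s (int M)" and d0: "d > 0"
    using assms(2) by simp_all
  hence "d dvd M"
    by (metis gcd_dvd2 int_dvd_int_iff)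
  hence dN: "M = d * (M div d)"
    by simp
  obtain s' where s': "s = int d * s'"
    using dg by (metis gcd_dvd1 dvdE)
  have "gcd s (int M) = int d * gcd s' (int (M div d))"
    unfolding s' by (subst dN) (simp add: gcd_mult_distrib_int[symmetric])
  hence "int d * gcd s' (int (M div d)) = int d * 1"
    using dg by simp
  hence "coprime s' (int (M div d))"
    using d0 by (simp add: coprime_iff_gcd_eq_1)
  thus ?thesis
    using that dN s' by blast
qed

text \<open>Parity rules out the other solution \<open>Q = 3\<close>, \<open>S = -2\<close>.\<close>

lemma int_eq_1_if_abs_affine_eq:
  fixes Q S :: int
  assumes "even Q" "Q \<ge> 2" "S \<ge> 1 - Q" "\<bar>1 + (Q - 1) * S\<bar> = Q"
  shows "S = 1"
proof (cases "1 + (Q - 1) * S = Q")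
  case True
  hence "(Q - 1) * (S - 1) = 0"
    by (simp add: algebra_simps)
  thus ?thesis
    using assms(2) by simp
next
  case False
  hence eq: "(Q - 1) * S = - (Q + 1)"
    using assms(4) by (auto simp: abs_if split: if_splits)
  show ?thesis
  proof (cases "S \<ge> -1")
    case True
    hence "(Q - 1) * S \<ge> (Q - 1) * (-1)"
      using assms(2) by (intro mult_left_mono) auto
    thus ?thesis
      using eq by simp
  next
    case False
    hence "(Q - 1) * S \<le> (Q - 1) * (-2)"
      using assms(2) by (intro mult_left_mono) auto
    hence "Q = 2"
      using eq assms(1,2) by presburger
    thus ?thesis
      using eq assms(3) by simp
  qed
qed

section \<open>Arithmetic in characteristic two\<close>

locale gf_q_squared =
  fixes m :: nat
  assumes m_pos: "m > 0"
    and card_UNIV: "card (UNIV :: 'a::{field,finite} set) = 2 ^ (2 * m)"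
begin

abbreviation q :: nat where "q \<equiv> 2 ^ m"

lemma q_ge_2: "q \<ge> 2"
  using power_increasing[of 1 m "2::nat"] m_pos by simp

lemma even_q: "even q"
  using m_pos by simp

lemma card_UNIV_eq: "card (UNIV :: 'a set) = q * q"
  by (simp add: card_UNIV power_mult power2_eq_square mult.commute)

lemma two_eq_zero: "(2::'a) = 0"
proof -
  have "(\<Sum>x\<in>UNIV. x + 1) = (\<Sum>x\<in>UNIV. (x::'a))"
    by (rule sum.reindex_bij_witness[of _ "\<lambda>x. x - 1" "\<lambda>x. x + 1"]) auto
  hence "of_nat (card (UNIV :: 'a set)) = (0::'a)"
    by (simp add: sum.distrib)
  hence "(2::'a) ^ (2 * m) = 0"
    using card_UNIV by simp
  thus ?thesis by simp
qed

lemma add_self_eq_0 [simp]: "(x::'a) + x = 0"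
  by (metis mult_2 two_eq_zero mult_zero_left)

lemma eq_iff_add_eq_0: "(x::'a) = y \<longleftrightarrow> x + y = 0"
  by (metis add_self_eq_0 add.assoc add_0_left add.commute)

lemma power_two_power_add: "((x::'a) + y) ^ 2 ^ k = x ^ 2 ^ k + y ^ 2 ^ k"
proof (induction k)
  case (Suc k)
  have square_add: "(u + v) ^ 2 = u ^ 2 + v ^ 2" for u v :: 'a
    by (simp add: power2_eq_square algebra_simps two_eq_zero flip: mult_2)
  have "(x + y) ^ 2 ^ Suc k = ((x + y) ^ 2 ^ k) ^ 2"
    by (simp add: power_mult[symmetric] mult.commute)
  also have "\<dots> = (x ^ 2 ^ k) ^ 2 + (y ^ 2 ^ k) ^ 2"
    by (simp add: Suc square_add)
  also have "\<dots> = x ^ 2 ^ Suc k + y ^ 2 ^ Suc k"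
    by (simp add: power_mult[symmetric] mult.commute)
  finally show ?case .
qed simp

lemma sum_power_two_power:
  "finite I \<Longrightarrow> (\<Sum>i\<in>I. f i) ^ 2 ^ k = (\<Sum>i\<in>I. (f i :: 'a) ^ 2 ^ k)"
  by (induction I rule: finite_induct) (simp_all add: power_two_power_add)

lemma square_eq_1_imp: "(y::'a) ^ 2 = 1 \<Longrightarrow> y = 1"
  using power_two_power_add[of y 1 1] eq_iff_add_eq_0[of y 1] by simp

lemma power_card_minus_1: "(x::'a) \<noteq> 0 \<Longrightarrow> x ^ (q * q - 1) = 1"
proof -
  assume x: "x \<noteq> 0"
  let ?A = "UNIV - {0::'a}"
  have "(\<Prod>y\<in>?A. x * y) = (\<Prod>y\<in>?A. y)"
    by (rule prod.reindex_bij_witness[of _ "\<lambda>y. y / x" "\<lambda>y. x * y"]) (use x in auto)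
  hence "x ^ card ?A = 1"
    by (simp add: prod.distrib)
  thus ?thesis
    using card_UNIV_eq by (simp add: card_Diff_singleton)
qed

lemma power_card: "(x::'a) ^ (q * q) = x"
proof (cases "x = 0")
  case False
  have "q * q = Suc (q * q - 1)"
    using q_ge_2 by simp
  thus ?thesis
    using power_card_minus_1[OF False] by (metis power_Suc mult_1_right)
qed (use q_ge_2 in simp)

lemma tr_add: "tr n ((x::'a) + y) = tr n x + tr n y"
  by (simp add: tr_def power_two_power_add sum.distrib)

lemma tr_0 [simp]: "tr n (0::'a) = 0"
  by (simp add: tr_def power_0_left)

lemma tr_sum: "finite I \<Longrightarrow> tr n (\<Sum>i\<in>I. f i) = (\<Sum>i\<in>I. tr n (f i :: 'a))"
  by (induction I rule: finite_induct) (simp_all add: tr_add)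

lemma tr_square: "tr n (x::'a) ^ 2 = tr n (x ^ 2)"
  unfolding tr_def using sum_power_two_power[of "{..<n}" "\<lambda>i. x ^ 2 ^ i" 1]
  by (simp add: power_mult[symmetric] mult.commute)

lemma tr_square_add_tr: "tr n (x::'a) ^ 2 + tr n x = x ^ 2 ^ n + x"
proof -
  have "tr n x ^ 2 = (\<Sum>i<n. x ^ 2 ^ Suc i)"
    unfolding tr_square by (simp add: tr_def power_mult[symmetric] mult.commute)
  hence "tr n x ^ 2 + x = tr n x + x ^ 2 ^ n"
    using sum.lessThan_Suc_shift[of "\<lambda>i. x ^ 2 ^ i" n] sum.lessThan_Suc[of "\<lambda>i. x ^ 2 ^ i" n]
    by (simp add: tr_def add.commute)
  hence "(tr n x ^ 2 + x) + (x + tr n x) = (tr n x + x ^ 2 ^ n) + (x + tr n x)"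
    by simp
  moreover have "(tr n x ^ 2 + x) + (x + tr n x) = tr n x ^ 2 + tr n x + (x + x)"
    "(tr n x + x ^ 2 ^ n) + (x + tr n x) = x ^ 2 ^ n + x + (tr n x + tr n x)"
    by (simp_all only: ac_simps)
  ultimately show ?thesis
    by simp
qed

lemma tr_eq_0_or_1: "(x::'a) ^ 2 ^ n = x \<Longrightarrow> tr n x = 0 \<or> tr n x = 1"
  using tr_square_add_tr[of n x] eq_iff_add_eq_0[of "tr n x ^ 2" "tr n x"]
  by (simp add: power2_eq_square)

lemma tr_full_eq_0_or_1: "tr (2 * m) (x::'a) = 0 \<or> tr (2 * m) x = 1"
  by (rule tr_eq_0_or_1) (metis card_UNIV card_UNIV_eq power_card)

lemma tr_subF_eq_0_or_1: "x \<in> subF m \<Longrightarrow> tr m (x::'a) = 0 \<or> tr m x = 1"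
  by (rule tr_eq_0_or_1) (simp add: subF_def)

lemma tr_double_mult_subF:
  assumes "y \<in> subF m"
  shows "tr (2 * m) ((c::'a) * y) = tr m ((c + c ^ q) * y)"
proof -
  have y: "y ^ q = y"
    using assms by (simp add: subF_def)
  have "(c * y) ^ 2 ^ (m + i) = (c ^ q * y) ^ 2 ^ i" for i
    by (simp add: power_add power_mult power_mult_distrib y)
  hence "tr (2 * m) (c * y) = tr m (c * y) + tr m (c ^ q * y)"
    unfolding tr_def mult_2 sum_lessThan_add by simp
  thus ?thesis
    by (simp add: tr_add distrib_right)
qed

lemma tr_square_add_self: "tr m ((w::'a) ^ 2 + w) = w ^ q + w"
  using tr_square_add_tr[of m w] tr_square[of m w] by (simp add: tr_add)

lemma chi_0 [simp]: "chi (0::'a) = 1"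
  by (simp add: chi_def)

lemma chi_1 [simp]: "chi (1::'a) = -1"
  by (simp add: chi_def)

lemma chi_add:
  assumes "(x::'a) = 0 \<or> x = 1" "y = 0 \<or> y = 1"
  shows "chi (x + y) = chi x * chi y"
  using assms by (elim disjE) simp_all

lemma chi_add_1: "(x::'a) = 0 \<or> x = 1 \<Longrightarrow> chi (x + 1) = - chi x"
  by auto

section \<open>The subfield and the unit circle\<close>

lemma mem_subF_iff: "x \<in> subF m \<longleftrightarrow> (x::'a) ^ q = x"
  by (simp add: subF_def)

lemma mem_unitU_iff: "x \<in> unitU m \<longleftrightarrow> (x::'a) ^ (q + 1) = 1"
  by (simp add: unitU_def)

lemma subF_add: "x \<in> subF m \<Longrightarrow> y \<in> subF m \<Longrightarrow> (x::'a) + y \<in> subF m"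
  by (simp add: mem_subF_iff power_two_power_add)

lemma subF_mult: "x \<in> subF m \<Longrightarrow> y \<in> subF m \<Longrightarrow> (x::'a) * y \<in> subF m"
  by (simp add: mem_subF_iff power_mult_distrib)

lemma subF_inverse: "x \<in> subF m \<Longrightarrow> inverse (x::'a) \<in> subF m"
  by (simp add: mem_subF_iff power_inverse)

lemma zero_in_subF: "(0::'a) \<in> subF m"
  using q_ge_2 by (simp add: mem_subF_iff)

lemma one_in_subF: "(1::'a) \<in> subF m"
  by (simp add: mem_subF_iff)

lemma add_power_q_in_subF: "(x::'a) + x ^ q \<in> subF m"
  by (simp add: mem_subF_iff power_two_power_add power_mult[symmetric] power_card add.commute)

lemma add_power_q_eq_0_iff: "(c::'a) + c ^ q = 0 \<longleftrightarrow> c \<in> subF m"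
  using eq_iff_add_eq_0[of "c ^ q" c] by (auto simp: mem_subF_iff add.commute)

lemma unitU_nonzero: "u \<in> unitU m \<Longrightarrow> (u::'a) \<noteq> 0"
  by (auto simp: mem_unitU_iff)

lemma unitU_power_q: "u \<in> unitU m \<Longrightarrow> (u::'a) ^ q = inverse u"
  using unitU_nonzero[of u] by (simp add: mem_unitU_iff field_simps)

lemma unitU_mult: "u \<in> unitU m \<Longrightarrow> v \<in> unitU m \<Longrightarrow> (u::'a) * v \<in> unitU m"
  unfolding mem_unitU_iff power_mult_distrib by simp

lemma unitU_inverse: "u \<in> unitU m \<Longrightarrow> inverse (u::'a) \<in> unitU m"
  by (metis mem_unitU_iff inverse_1 power_inverse)

lemma one_in_unitU: "(1::'a) \<in> unitU m"
  by (simp add: mem_unitU_iff)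

lemma unitU_power: "u \<in> unitU m \<Longrightarrow> (u::'a) ^ k \<in> unitU m"
  by (metis mem_unitU_iff power_mult mult.commute power_one)

lemma subF_inter_unitU: "y \<in> subF m \<Longrightarrow> y \<in> unitU m \<Longrightarrow> (y::'a) = 1"
  using square_eq_1_imp[of y] by (simp add: mem_subF_iff mem_unitU_iff power2_eq_square)

lemma card_subF_le: "card (subF m :: 'a set) \<le> q"
proof -
  let ?p = "monom (1::'a) q + monom 1 1"
  have deg: "degree ?p = q"
    by (subst degree_add_eq_left) (use q_ge_2 in \<open>simp_all add: degree_monom_eq\<close>)
  hence "?p \<noteq> 0"
    using q_ge_2 by auto
  moreover have "subF m = {x. poly ?p x = 0}"
    using eq_iff_add_eq_0 by (auto simp: poly_monom mem_subF_iff)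
  ultimately show ?thesis
    using card_poly_roots_bound[of ?p] deg by simp
qed

lemma card_unitU_le: "card (unitU m :: 'a set) \<le> q + 1"
proof -
  let ?p = "monom (1::'a) (q + 1) + monom 1 0"
  have deg: "degree ?p = q + 1"
    by (subst degree_add_eq_left) (simp_all add: degree_monom_eq)
  hence "?p \<noteq> 0"
    by auto
  moreover have "unitU m = {x. poly ?p x = 0}"
    using eq_iff_add_eq_0 by (auto simp: poly_monom mem_unitU_iff)
  ultimately show ?thesis
    using card_poly_roots_bound[of ?p] deg by simp
qed

text \<open>The exponent \<open>e = (q - 1) q / 2\<close> satisfies \<open>e \<equiv> 0 (mod q - 1)\<close> and
  \<open>e \<equiv> 1 (mod q + 1)\<close>, so \<open>x\<^sup>e\<close> lies in \<open>unitU m\<close> and \<open>x / x\<^sup>e\<close> in \<open>subF m\<close>.\<close>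

lemma polar_decomposition:
  assumes "(x::'a) \<noteq> 0"
  obtains y u where "y \<in> subF m" "y \<noteq> 0" "u \<in> unitU m" "x = y * u"
proof -
  define k where "k = q div 2 - 1"
  have k: "q = 2 * k + 2"
    using even_q q_ge_2 unfolding k_def by presburger
  define e where "e = (2 * k + 1) * (k + 1)"
  define u where "u = x ^ e"
  have "q * q - 1 = (2 * k + 1) * (2 * k + 3)"
    using k by (simp add: algebra_simps)
  hence x1: "x ^ ((2 * k + 1) * (2 * k + 3)) = 1"
    using power_card_minus_1[OF assms] by simp
  have u0: "u \<noteq> 0"
    using assms by (simp add: u_def)
  have "e * (q + 1) = (2 * k + 1) * (2 * k + 3) * (k + 1)"
    by (simp add: e_def k algebra_simps)
  hence "u ^ (q + 1) = (x ^ ((2 * k + 1) * (2 * k + 3))) ^ (k + 1)"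
    unfolding u_def by (simp only: power_mult[symmetric])
  hence uU: "u \<in> unitU m"
    using x1 by (simp add: mem_unitU_iff)
  have "1 + e * q = (q + e) + (2 * k + 1) * (2 * k + 3) * k"
    by (simp add: e_def k algebra_simps)
  hence "x ^ (1 + e * q) = x ^ (q + e) * (x ^ ((2 * k + 1) * (2 * k + 3))) ^ k"
    by (simp only: power_add power_mult)
  hence "x ^ q * u = x * u ^ q"
    using x1 by (simp add: u_def power_add power_mult mult.commute)
  hence "(x / u) ^ q = x / u"
    using u0 by (simp add: field_simps)
  thus ?thesis
    using that[of "x / u" u] assms u0 uU by (simp add: mem_subF_iff)
qed

lemma polar_decomposition_unique:
  assumes "y \<in> subF m" "y' \<in> subF m" "y' \<noteq> 0" "u \<in> unitU m" "u' \<in> unitU m"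
    and "(y::'a) * u = y' * u'"
  shows "y = y' \<and> u = u'"
proof -
  have "u \<noteq> 0" "u' \<noteq> 0"
    using assms unitU_nonzero by auto
  moreover have "y / y' = u' / u"
    using assms(3,6) calculation by (simp add: field_simps)
  moreover have "y / y' \<in> subF m" "u' / u \<in> unitU m"
    using assms by (simp_all add: divide_inverse subF_mult subF_inverse unitU_mult unitU_inverse)
  ultimately show ?thesis
    using subF_inter_unitU assms(3,6) by (metis divide_eq_1_iff)
qed

abbreviation subF_nz :: "'a set" where "subF_nz \<equiv> subF m - {0}"

lemma bij_betw_polar: "bij_betw (\<lambda>(y, u). y * u) (subF_nz \<times> unitU m) (UNIV - {0::'a})"
proof (rule bij_betw_imageI)
  show "inj_on (\<lambda>(y, u). y * u) (subF_nz \<times> unitU m)"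
    by (auto simp: inj_on_def dest: polar_decomposition_unique)
  show "(\<lambda>(y, u). y * u) ` (subF_nz \<times> unitU m) = UNIV - {0}"
    using unitU_nonzero by (auto simp: image_iff intro: polar_decomposition)
qed

lemma card_subF_unitU: "card (subF m :: 'a set) = q \<and> card (unitU m :: 'a set) = q + 1"
proof -
  let ?a = "card (subF m :: 'a set) - 1" and ?b = "card (unitU m :: 'a set)"
  have "card (subF_nz \<times> (unitU m :: 'a set)) = card (UNIV - {0::'a})"
    using bij_betw_polar by (rule bij_betw_same_card)
  hence ab: "?a * ?b = (q - 1) * (q + 1)"
    using zero_in_subF card_UNIV_eq q_ge_2
    by (simp add: card_cartesian_product card_Diff_singleton algebra_simps)
  have "?a * ?b \<le> ?a * (q + 1)"
    using card_unitU_le by (rule mult_le_mono2)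
  moreover have "?a * (q + 1) \<le> (q - 1) * (q + 1)"
    using card_subF_le by (intro mult_le_mono1) simp
  ultimately have "?a * (q + 1) = (q - 1) * (q + 1)"
    using ab by linarith
  hence a: "?a = q - 1"
    by (simp only: mult_cancel2) simp
  have "(q - 1) * ?b = (q - 1) * (q + 1)"
    using ab unfolding a .
  hence "?b = q + 1"
    using q_ge_2 by (subst (asm) mult_left_cancel) simp_all
  moreover have "card (subF m :: 'a set) = q"
    using a q_ge_2 card_subF_le by linarith
  ultimately show ?thesis
    by simp
qed

lemma card_subF: "card (subF m :: 'a set) = q"
  using card_subF_unitU by simp

lemma card_unitU: "card (unitU m :: 'a set) = q + 1"
  using card_subF_unitU by simp

lemma card_subF_nz: "card subF_nz = q - 1"
  using card_subF zero_in_subF by (simp add: card_Diff_singleton)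

lemma sum_polar:
  "(\<Sum>x\<in>UNIV. h x) = h 0 + (\<Sum>u\<in>unitU m. \<Sum>y\<in>subF_nz. h (y * u :: 'a) :: 'b::comm_monoid_add)"
proof -
  have "(\<Sum>x\<in>UNIV - {0}. h x) = (\<Sum>(y, u)\<in>subF_nz \<times> unitU m. h (y * u))"
    using sum.reindex_bij_betw[OF bij_betw_polar, of h] by (simp add: case_prod_beta)
  also have "\<dots> = (\<Sum>u\<in>unitU m. \<Sum>y\<in>subF_nz. h (y * u))"
    by (simp add: sum.cartesian_product[symmetric] sum.swap[of _ subF_nz])
  finally show ?thesis
    by (simp add: sum.remove[of UNIV 0])
qed

section \<open>Additive character sums\<close>

lemma ex_tr_eq_1: "\<exists>z\<in>subF m. tr m (z::'a) = 1"
proof (rule ccontr)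
  assume "\<not> ?thesis"
  hence all0: "\<forall>z\<in>subF m. tr m (z::'a) = 0"
    using tr_subF_eq_0_or_1 by blast
  let ?p = "\<Sum>i<m. monom (1::'a) (2 ^ i)"
  have deg: "degree ?p \<le> 2 ^ (m - 1)"
    by (rule degree_sum_le) (auto simp: degree_monom_eq intro: power_increasing)
  have "coeff ?p (2 ^ (m - 1)) = (\<Sum>i<m. if i = m - 1 then 1 else 0)"
    unfolding coeff_sum coeff_monom by (intro sum.cong) auto
  hence "?p \<noteq> 0"
    using m_pos by auto
  moreover have "subF m \<subseteq> {x. poly ?p x = 0}"
    using all0 by (auto simp: poly_sum poly_monom tr_def)
  ultimately have "q \<le> 2 ^ (m - 1)"
    using card_poly_roots_bound[of ?p] card_mono[of "{x. poly ?p x = 0}" "subF m"] card_subF deg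
    by (metis (no_types, lifting) finite order_trans)
  moreover have "(2::nat) ^ (m - 1) < 2 ^ m"
    using m_pos by (intro power_strict_increasing) auto
  ultimately show False
    by linarith
qed

lemma sum_chi_tr_subF:
  assumes "b \<in> subF m"
  shows "(\<Sum>y\<in>subF m. chi (tr m ((b::'a) * y))) = (if b = 0 then int q else 0)"
proof (cases "b = 0")
  case True
  thus ?thesis
    using card_subF by simp
next
  case False
  obtain z :: 'a where z: "z \<in> subF m" "tr m z = 1"
    using ex_tr_eq_1 by blast
  define w where "w = z / b"
  have wF: "w \<in> subF m"
    using z assms by (simp add: w_def divide_inverse subF_mult subF_inverse)
  have bw: "b * w = z"
    using False by (simp add: w_def)
  let ?S = "\<Sum>y\<in>subF m. chi (tr m (b * y))"
  have "?S = (\<Sum>y\<in>subF m. chi (tr m (b * (y + w))))"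
    by (rule sum.reindex_bij_witness[of _ "\<lambda>y. y + w" "\<lambda>y. y + w"])
      (auto simp: wF subF_add add.assoc)
  also have "\<dots> = (\<Sum>y\<in>subF m. - chi (tr m (b * y)))"
    using assms by (intro sum.cong)
      (simp_all add: distrib_left tr_add bw z chi_add_1 tr_subF_eq_0_or_1 subF_mult)
  finally show ?thesis
    using False by (simp add: sum_negf)
qed

lemma sum_chi_tr_subF_nz:
  "(\<Sum>y\<in>subF_nz. chi (tr (2 * m) ((c::'a) * y))) = (if c \<in> subF m then int q - 1 else -1)"
proof -
  have "(\<Sum>y\<in>subF_nz. chi (tr (2 * m) (c * y))) = (\<Sum>y\<in>subF_nz. chi (tr m ((c + c ^ q) * y)))"
    by (intro sum.cong) (auto simp: tr_double_mult_subF)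
  also have "\<dots> = (\<Sum>y\<in>subF m. chi (tr m ((c + c ^ q) * y))) - 1"
    using zero_in_subF by (simp add: sum_diff1)
  finally show ?thesis
    using sum_chi_tr_subF[OF add_power_q_in_subF[of c]] by (simp add: add_power_q_eq_0_iff)
qed

lemma unitU_mult_mem_subF_unique:
  assumes "(c::'a) \<noteq> 0"
  obtains u0 where "u0 \<in> unitU m" "\<And>u. u \<in> unitU m \<Longrightarrow> c * u \<in> subF m \<longleftrightarrow> u = u0"
proof -
  obtain y u where yu: "y \<in> subF m" "y \<noteq> 0" "u \<in> unitU m" "c = y * u"
    using polar_decomposition[OF assms] by blast
  have "c * v \<in> subF m \<longleftrightarrow> v = inverse u" if v: "v \<in> unitU m" for v
  proof
    assume "c * v \<in> subF m"
    hence "inverse y * (c * v) \<in> subF m"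
      using yu by (simp add: subF_mult subF_inverse)
    hence "u * v = 1"
      using yu v subF_inter_unitU unitU_mult by (simp add: field_simps)
    thus "v = inverse u"
      by (simp add: inverse_unique mult.commute)
  next
    assume "v = inverse u"
    thus "c * v \<in> subF m"
      using yu unitU_nonzero by (simp add: mult.assoc)
  qed
  thus ?thesis
    using that unitU_inverse[OF yu(3)] by blast
qed

section \<open>Bentness of functions constant on the lines through the origin\<close>

context
  fixes f :: "'a \<Rightarrow> 'a"
  assumes f_0: "f 0 = 0"
    and f_boolean: "\<And>x. f x = 0 \<or> f x = 1"
    and f_subF_invariant: "\<And>y u. y \<in> subF_nz \<Longrightarrow> u \<in> unitU m \<Longrightarrow> f (y * u) = f u"
begin

lemma walsh_eq:
  "walsh (2 * m) f c = 1 - (\<Sum>u\<in>unitU m. chi (f u))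
     + int q * (\<Sum>u\<in>unitU m. if c * u \<in> subF m then chi (f u) else 0)"
proof -
  have "chi (f (y * u) + tr (2 * m) (c * (y * u))) = chi (f u) * chi (tr (2 * m) ((c * u) * y))"
    if "y \<in> subF_nz" "u \<in> unitU m" for y u
    using chi_add[OF f_boolean tr_full_eq_0_or_1] f_subF_invariant[OF that]
    by (simp add: mult_ac)
  hence "walsh (2 * m) f c
      = 1 + (\<Sum>u\<in>unitU m. chi (f u) * (\<Sum>y\<in>subF_nz. chi (tr (2 * m) ((c * u) * y))))"
    unfolding walsh_def sum_polar[of "\<lambda>x. chi (f x + tr (2 * m) (c * x))"]
    by (simp add: f_0 sum_distrib_left)
  also have "\<dots> = 1 + (\<Sum>u\<in>unitU m. chi (f u) * (if c * u \<in> subF m then int q - 1 else -1))"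
    by (simp only: sum_chi_tr_subF_nz)
  also have "\<dots> = 1 + (\<Sum>u\<in>unitU m. - chi (f u) + int q * (if c * u \<in> subF m then chi (f u) else 0))"
    by (intro arg_cong2[where f = "(+)"] refl sum.cong) (auto simp: algebra_simps)
  finally show ?thesis
    by (simp add: sum.distrib sum_negf sum_distrib_left sum_subtractf)
qed

lemma walsh_0: "walsh (2 * m) f 0 = 1 + (int q - 1) * (\<Sum>u\<in>unitU m. chi (f u))"
  using walsh_eq[of 0] zero_in_subF by (simp add: algebra_simps)

lemma walsh_nonzero:
  assumes "c \<noteq> 0"
  obtains u0 where "walsh (2 * m) f c = 1 - (\<Sum>u\<in>unitU m. chi (f u)) + int q * chi (f u0)"
proof -
  obtain u0 where u0: "u0 \<in> unitU m" "\<And>u. u \<in> unitU m \<Longrightarrow> c * u \<in> subF m \<longleftrightarrow> u = u0"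
    using unitU_mult_mem_subF_unique[OF assms] by blast
  have "(\<Sum>u\<in>unitU m. if c * u \<in> subF m then chi (f u) else 0) = chi (f u0)"
    using u0 by (simp cong: if_cong)
  thus ?thesis
    using walsh_eq[of c] that by simp
qed

lemma bent_iff_sum_chi_unitU_eq_1:
  assumes f_1: "f 1 = 0"
  shows "bent (2 * m) f \<longleftrightarrow> (\<Sum>u\<in>unitU m. chi (f u)) = 1"
proof -
  let ?S = "\<Sum>u\<in>unitU m. chi (f u)"
  have sq: "int q ^ 2 = 2 ^ (2 * m)"
    by (simp add: power_mult[symmetric] mult.commute)
  show ?thesis
  proof
    assume "bent (2 * m) f"
    hence "\<bar>1 + (int q - 1) * ?S\<bar> = int q"
      using walsh_0 sq unfolding bent_def by (metis power2_eq_iff_nonneg abs_ge_zero of_nat_0_le_iff)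
    moreover have "?S \<ge> 1 - int q"
    proof -
      have "?S = chi (f 1) + (\<Sum>u\<in>unitU m - {1}. chi (f u))"
        using one_in_unitU by (simp add: sum.remove)
      moreover have "(\<Sum>u\<in>unitU m - {1}. chi (f u)) \<ge> (\<Sum>u\<in>unitU m - {1::'a}. -1)"
        by (rule sum_mono) (simp add: chi_def)
      ultimately show ?thesis
        using f_1 card_unitU one_in_unitU by (simp add: card_Diff_singleton)
    qed
    moreover have "even (int q)"
      using even_q by simp
    moreover have "int q \<ge> 2"
      using q_ge_2 by linarith
    ultimately show "?S = 1"
      by (intro int_eq_1_if_abs_affine_eq)
  next
    assume S: "?S = 1"
    show "bent (2 * m) f"
      unfolding bent_def
    proof
      fix c :: 'a
      show "\<bar>walsh (2 * m) f c\<bar> ^ 2 = 2 ^ (2 * m)"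
      proof (cases "c = 0")
        case False
        then obtain u0 where "walsh (2 * m) f c = int q * chi (f u0)"
          using walsh_nonzero S by auto
        thus ?thesis
          using sq by (simp add: abs_mult chi_def)
      qed (use walsh_0 S sq in simp)
    qed
  qed
qed

end

section \<open>Kloosterman sums over the unit circle\<close>

lemma unitU_ne_inverse: "u \<in> unitU m \<Longrightarrow> u \<noteq> 1 \<Longrightarrow> (u::'a) \<noteq> inverse u"
  using square_eq_1_imp[of u] unitU_nonzero[of u] by (auto simp: power2_eq_square) (metis right_inverse)

lemma add_inverse_in_subF_nz:
  assumes "u \<in> unitU m" "u \<noteq> 1"
  shows "(u::'a) + inverse u \<in> subF_nz"
  using add_power_q_in_subF[of u] unitU_power_q[OF assms(1)] unitU_ne_inverse[OF assms]
    eq_iff_add_eq_0[of u "inverse u"] by simp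

lemma add_inverse_fiber:
  assumes "u \<in> unitU m" "u \<noteq> 1"
  shows "{v \<in> unitU m - {1}. v + inverse v = u + inverse u} = {u, inverse (u::'a)}"
proof
  have u0: "u \<noteq> 0"
    using assms unitU_nonzero by auto
  show "{v \<in> unitU m - {1}. v + inverse v = u + inverse u} \<subseteq> {u, inverse u}"
  proof
    fix v assume v: "v \<in> {v \<in> unitU m - {1}. v + inverse v = u + inverse u}"
    hence v0: "v \<noteq> 0"
      using unitU_nonzero by auto
    have "(v + inverse v) * (u * v) + (u + inverse u) * (u * v) = 0"
      using v by simp
    moreover have "(v + inverse v) * (u * v) + (u + inverse u) * (u * v) = (v + u) * (u * v + 1)"
      using u0 v0 by (simp add: field_simps)
    ultimately have "v = u \<or> u * v = 1"
      using eq_iff_add_eq_0 by (metis mult_eq_0_iff)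
    thus "v \<in> {u, inverse u}"
      using u0 by (auto simp: field_simps)
  qed
  show "{u, inverse u} \<subseteq> {v \<in> unitU m - {1}. v + inverse v = u + inverse u}"
    using assms u0 unitU_inverse by (auto simp: add.commute)
qed

text \<open>With \<open>w = u / (u + 1)\<close> one has \<open>1 / (u + 1/u) = w\<^sup>2 + w\<close> and \<open>w\<^sup>q + w = 1\<close>.\<close>

lemma tr_inverse_add_inverse:
  assumes u: "u \<in> unitU m" "u \<noteq> 1"
  shows "tr m (inverse (u + inverse (u::'a))) = 1"
proof -
  have u0: "u \<noteq> 0"
    using u unitU_nonzero by auto
  have u1: "u + 1 \<noteq> 0"
    using u eq_iff_add_eq_0 by blast
  define w where "w = u / (u + 1)"
  have "(w ^ 2 + w) * (u + 1) ^ 2 = (w * (u + 1)) ^ 2 + (w * (u + 1)) * (u + 1)"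
    by (simp add: algebra_simps power2_eq_square)
  also have "\<dots> = u ^ 2 + u * (u + 1)"
    using u1 by (simp add: w_def)
  also have "\<dots> = (u ^ 2 + u ^ 2) + u"
    by (simp add: algebra_simps power2_eq_square)
  also have "\<dots> = u"
    by simp
  finally have "(w ^ 2 + w) * (u + 1) ^ 2 = u" .
  moreover have "(u + 1) ^ 2 = u ^ 2 + 1"
    using power_two_power_add[of u 1 1] by simp
  moreover have "(u + 1) ^ 2 \<noteq> 0"
    using u1 by simp
  ultimately have "w ^ 2 + w = u / (u ^ 2 + 1)"
    by (simp add: eq_divide_eq)
  also have "\<dots> = inverse (u + inverse u)"
    using u0 by (simp add: field_simps power2_eq_square)
  finally have "inverse (u + inverse u) = w ^ 2 + w" ..
  moreover have "w ^ q + w = 1"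
  proof -
    have "w ^ q = u ^ q / (u + 1) ^ q"
      by (simp add: w_def power_divide)
    also have "\<dots> = inverse u / (inverse u + 1)"
      using unitU_power_q[OF u(1)] power_two_power_add[of u 1 m] by simp
    also have "\<dots> = 1 / (u + 1)"
      using u0 u1 by (simp add: field_simps)
    finally have "w ^ q + w = 1 / (u + 1) + u / (u + 1)"
      by (simp add: w_def)
    also have "\<dots> = 1"
      using u1 by (simp add: field_simps)
    finally show ?thesis .
  qed
  ultimately show ?thesis
    using tr_square_add_self by simp
qed

lemma card_add_inverse_fiber_le:
  assumes "t \<in> subF_nz"
  shows "int (card {u \<in> unitU m - {1}. u + inverse u = t}) \<le> 1 - chi (tr m (inverse (t::'a)))"
proof (cases "\<exists>u \<in> unitU m - {1}. u + inverse u = t")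
  case True
  then obtain u where u: "u \<in> unitU m" "u \<noteq> 1" and t: "t = u + inverse u"
    by blast
  have "card {u, inverse u} = 2"
    using unitU_ne_inverse[OF u] by (simp only: card_2_iff) blast
  thus ?thesis
    unfolding t add_inverse_fiber[OF u] tr_inverse_add_inverse[OF u] by simp
next
  case False
  hence "{u \<in> unitU m - {1}. u + inverse u = t} = {}"
    by blast
  thus ?thesis
    by (simp only: card.empty of_nat_0) (simp add: chi_def)
qed

text \<open>Equality holds pointwise because both sides have the same sum \<open>q\<close> over \<open>subF_nz\<close>.\<close>

lemma card_add_inverse_fiber:
  assumes "t \<in> subF_nz"
  shows "int (card {u \<in> unitU m - {1}. u + inverse u = t}) = 1 - chi (tr m (inverse (t::'a)))"
proof -
  define A where "A t = int (card {u \<in> unitU m - {1}. u + inverse u = t})" for t :: 'a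
  define B where "B t = 1 - chi (tr m (inverse t))" for t :: 'a
  have "(\<lambda>u. u + inverse u) ` (unitU m - {1}) \<subseteq> subF_nz"
    using add_inverse_in_subF_nz by (intro image_subsetI) simp
  hence "(\<Sum>t\<in>subF_nz. A t) = (\<Sum>u\<in>unitU m - {1::'a}. 1)"
    using sum_fun_comp[of "unitU m - {1}" subF_nz "\<lambda>u. u + inverse u" "\<lambda>_. 1::int"]
    by (simp add: A_def)
  also have "\<dots> = int q"
    using card_unitU one_in_unitU by (simp add: card_Diff_singleton)
  also have "\<dots> = (\<Sum>t\<in>subF_nz. B t)"
  proof -
    have "(\<Sum>t\<in>subF_nz. chi (tr m (inverse t))) = (\<Sum>t\<in>subF_nz. chi (tr m (1 * t)))"
      by (rule sum.reindex_bij_witness[of _ inverse inverse]) (auto intro: subF_inverse)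
    also have "\<dots> = -1"
      using sum_chi_tr_subF[OF one_in_subF] zero_in_subF by (simp add: sum_diff1)
    finally show ?thesis
      using card_subF_nz q_ge_2 by (simp add: B_def sum_subtractf)
  qed
  finally have "(\<Sum>t\<in>subF_nz. B t - A t) = 0"
    by (simp add: sum_subtractf)
  moreover have "\<forall>t\<in>subF_nz. 0 \<le> B t - A t"
    using card_add_inverse_fiber_le by (simp add: A_def B_def)
  ultimately have "\<forall>t\<in>subF_nz. B t - A t = 0"
    by (subst (asm) sum_nonneg_eq_0_iff) auto
  thus ?thesis
    using assms by (simp add: A_def B_def)
qed

lemma sum_chi_tr_unitU:
  assumes g: "g \<in> subF m" "g \<noteq> 0"
  shows "(\<Sum>u\<in>unitU m. chi (tr (2 * m) (g * u))) = 1 - kloosterman m (g::'a)"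
proof -
  define G where "G t = chi (tr m (g * t))" for t :: 'a
  have "tr (2 * m) (g * u) = tr m (g * (u + inverse u))" if "u \<in> unitU m" for u
    using tr_double_mult_subF[OF one_in_subF, of "g * u"] g unitU_power_q[OF that]
    by (simp add: power_mult_distrib mem_subF_iff distrib_left)
  hence "(\<Sum>u\<in>unitU m. chi (tr (2 * m) (g * u))) = G 0 + (\<Sum>u\<in>unitU m - {1}. G (u + inverse u))"
    using one_in_unitU by (simp add: G_def sum.remove)
  also have "(\<Sum>u\<in>unitU m - {1}. G (u + inverse u))
      = (\<Sum>t\<in>subF_nz. of_nat (card {u \<in> unitU m - {1}. u + inverse u = t}) * G t)"
    using add_inverse_in_subF_nz by (intro sum_fun_comp) auto
  also have "\<dots> = (\<Sum>t\<in>subF_nz. G t - chi (tr m (g * t + inverse t)))"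
  proof (intro sum.cong refl)
    fix t assume t: "t \<in> subF_nz"
    have "chi (tr m (g * t + inverse t)) = G t * chi (tr m (inverse t))"
      using t g tr_subF_eq_0_or_1 subF_mult subF_inverse by (simp add: G_def tr_add chi_add)
    thus "of_nat (card {u \<in> unitU m - {1}. u + inverse u = t}) * G t
        = G t - chi (tr m (g * t + inverse t))"
      unfolding card_add_inverse_fiber[OF t] by (simp add: algebra_simps)
  qed
  also have "\<dots> = (\<Sum>t\<in>subF m. G t) - G 0 - (kloosterman m g - chi (tr m (g * 0 + inverse 0)))"
    using zero_in_subF by (simp add: kloosterman_def sum_diff1 sum_subtractf)
  finally show ?thesis
    using sum_chi_tr_subF[OF g(1)] g by (simp add: G_def)
qed

section \<open>Power maps on the unit circle\<close>

lemma powi_unitU: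
  assumes "(u::'a) \<in> unitU m"
  shows "u powi e = u ^ nat (e mod int (q + 1))"
proof -
  let ?M = "int (q + 1)"
  have u0: "u \<noteq> 0"
    using assms unitU_nonzero by blast
  have "u powi ?M = 1"
    using assms mem_unitU_iff power_int_of_nat by metis
  have "u powi e = u powi (?M * (e div ?M) + e mod ?M)"
    by (simp only: mult_div_mod_eq)
  also have "\<dots> = (u powi ?M) powi (e div ?M) * u powi (e mod ?M)"
    using u0 by (simp only: power_int_add[of u] power_int_mult[symmetric] simp_thms)
  also have "e mod ?M = int (nat (e mod ?M))"
    by (simp only: int_nat_eq pos_mod_sign of_nat_0_less_iff zero_less_Suc Suc_eq_plus1 if_True)
  finally show ?thesis
    using \<open>u powi ?M = 1\<close> by (simp only: power_int_of_nat power_int_1_left mult_1)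
qed

lemma unitU_powi: "(u::'a) \<in> unitU m \<Longrightarrow> u powi e \<in> unitU m"
  by (simp add: powi_unitU unitU_power)

lemma sum_unitU_mult:
  assumes "(c::'a) \<in> unitU m"
  shows "(\<Sum>x\<in>unitU m. h (c * x)) = (\<Sum>x\<in>unitU m. h x)"
proof -
  have "c \<noteq> 0"
    using assms unitU_nonzero by auto
  thus ?thesis
    using assms unitU_mult unitU_inverse
    by (intro sum.reindex_bij_witness[of _ "\<lambda>x. inverse c * x" "\<lambda>x. c * x"])
      (simp_all add: mult.assoc[symmetric])
qed

lemma sum_powi_coprime:
  assumes "coprime s (2 ^ m + 1)" and "(A :: 'a set) \<subseteq> unitU m"
    and "\<And>x. x \<in> A \<Longrightarrow> x powi s \<in> A"
  shows "(\<Sum>x\<in>A. h (x powi s)) = (\<Sum>x\<in>A. h x)"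
proof -
  obtain t v where "t * s + v * (int q + 1) = 1"
    using bezout_int[of s "int q + 1"] assms(1) by (auto simp: coprime_iff_gcd_eq_1)
  hence "(t * s) mod (int q + 1) = 1 mod (int q + 1)"
    using mod_mult_self1[of "t * s" v "int q + 1"] by simp
  hence st: "(s * t) mod int (q + 1) = 1"
    using q_ge_2 by (simp add: mult.commute add.commute)
  have inverse_powi: "(x powi s) powi t = x" if "x \<in> A" for x
  proof -
    have "(x powi s) powi t = x powi (s * t)"
      by (simp add: power_int_mult)
    also have "\<dots> = x"
      using that assms(2) st by (simp add: powi_unitU subset_iff)
    finally show ?thesis .
  qed
  hence "inj_on (\<lambda>x. x powi s) A"
    by (rule inj_on_inverseI)
  moreover have "(\<lambda>x. x powi s) ` A = A"
    using calculation assms(3) by (intro endo_inj_surj) auto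
  ultimately show ?thesis
    using sum.reindex[of "\<lambda>x. x powi s" A h] by simp
qed

lemma sum_powers_root_of_unity:
  assumes "z ^ N = 1" "odd N"
  shows "(\<Sum>i=1..N - 1. (z::'a) ^ i) = (if z = 1 then 0 else 1)"
proof (cases "z = 1")
  case True
  obtain k where "N - 1 = 2 * k"
    using assms(2) by (metis odd_two_times_div_two_nat)
  thus ?thesis
    using True two_eq_zero by simp
next
  case False
  have "N > 0"
    using assms(2) by (rule odd_pos)
  hence "{..<N} = insert 0 {1..N - 1}"
    by auto
  hence "1 + (\<Sum>i=1..N - 1. z ^ i) = (z ^ N - 1) / (z - 1)"
    using geometric_sum[OF False, of N] by simp
  thus ?thesis
    using assms(1) False eq_iff_add_eq_0[of _ 1] by (simp add: add.commute)
qed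

lemma powi_mult_q_minus_1: "(x::'a) powi (e * (2 ^ m - 1)) = (x ^ (q - 1)) powi e"
proof -
  have "(2::int) ^ m - 1 = int (q - 1)"
    using q_ge_2 by simp
  hence "x powi (e * (2 ^ m - 1)) = x powi (int (q - 1) * e)"
    by (simp only: mult.commute)
  thus ?thesis
    by (simp only: power_int_mult power_int_of_nat)
qed

lemma fun_f_boolean: "fun_f m r s a x = 0 \<or> fun_f m r s a x = (1::'a)"
  unfolding fun_f_def by (simp add: tr_sum[symmetric] tr_full_eq_0_or_1)

lemma fun_f_mult_subF:
  assumes "y \<in> subF_nz" "u \<in> unitU m"
  shows "fun_f m r s a (y * u) = fun_f m r s (a::'a) u"
proof -
  have "y * y ^ (q - 1) = y * 1"
    using assms(1) q_ge_2 by (simp add: mem_subF_iff power_Suc[symmetric])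
  hence "(y * u) ^ (q - 1) = u ^ (q - 1)"
    using assms(1) by (simp add: power_mult_distrib)
  thus ?thesis
    using assms unitU_nonzero by (simp add: fun_f_def powi_mult_q_minus_1)
qed

lemma fun_f_unitU:
  assumes "u \<in> unitU m" "r > 0" "r dvd q + 1"
  shows "fun_f m r s (a::'a) u = (if (u ^ (q - 1)) ^ r = 1 then 0 else tr (2 * m) (a * (u ^ (q - 1)) powi s))"
proof -
  define w where "w = u ^ (q - 1)"
  obtain N where N: "q + 1 = r * N"
    using assms(3) by blast
  have w0: "w \<noteq> 0"
    using assms(1) unitU_nonzero by (simp add: w_def)
  have "w \<in> unitU m"
    using unitU_power[OF assms(1)] by (simp add: w_def)
  hence "(w ^ r) ^ N = 1"
    unfolding power_mult[symmetric] N[symmetric] by (simp add: mem_unitU_iff)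
  moreover have "odd (r * N)"
    using even_q unfolding N[symmetric] by simp
  ultimately have geometric: "(\<Sum>i=1..N - 1. (w ^ r) ^ i) = (if w ^ r = 1 then 0 else 1)"
    by (intro sum_powers_root_of_unity) simp_all
  have "w powi (int r * int i + s) = w powi s * (w ^ r) ^ i" for i
  proof -
    have "w powi (int r * int i + s) = w powi (int r * int i) * w powi s"
      using w0 by (simp add: power_int_add)
    also have "w powi (int r * int i) = (w ^ r) ^ i"
      by (simp only: of_nat_mult[symmetric] power_int_of_nat power_mult)
    finally show ?thesis
      by (simp only: mult.commute)
  qed
  hence "(\<Sum>i=1..N - 1. tr (2 * m) (a * w powi (int r * int i + s)))
      = tr (2 * m) (a * w powi s * (\<Sum>i=1..N - 1. (w ^ r) ^ i))"
    by (simp add: tr_sum sum_distrib_left mult.assoc)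
  also have "\<dots> = (if w ^ r = 1 then 0 else tr (2 * m) (a * w powi s))"
    unfolding geometric by simp
  finally have "(\<Sum>i=1..N - 1. tr (2 * m) (a * w powi (int r * int i + s)))
      = (if w ^ r = 1 then 0 else tr (2 * m) (a * w powi s))" .
  moreover have "(2 ^ m + 1) div r = N"
    using N assms(2) by simp
  ultimately show ?thesis
    using assms(1) unitU_nonzero by (simp add: fun_f_def powi_mult_q_minus_1 w_def)
qed

lemma bij_betw_power_q_minus_1: "bij_betw (\<lambda>u. u ^ (q - 1)) (unitU m) (unitU m :: 'a set)"
proof -
  have "inj_on (\<lambda>u. u ^ (q - 1)) (unitU m :: 'a set)"
  proof (rule inj_onI)
    fix u v :: 'a
    assume u: "u \<in> unitU m" and v: "v \<in> unitU m" and eq: "u ^ (q - 1) = v ^ (q - 1)"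
    define z where "z = u * inverse v"
    have v0: "v \<noteq> 0"
      using v unitU_nonzero by auto
    have zU: "z \<in> unitU m"
      using u v by (simp add: z_def unitU_mult unitU_inverse)
    have "z ^ (q - 1) = 1"
      using eq v0 by (simp add: z_def power_mult_distrib power_inverse)
    moreover have "z ^ (q - 1) * z ^ 2 = z ^ (q + 1)"
      using q_ge_2 by (simp add: power_add[symmetric])
    ultimately have "z ^ 2 = 1"
      using zU unfolding mem_unitU_iff by simp
    hence "z = 1"
      by (rule square_eq_1_imp)
    thus "u = v"
      using v0 by (simp add: z_def field_simps)
  qed
  moreover have "(\<lambda>u. u ^ (q - 1)) ` (unitU m :: 'a set) = unitU m"
    by (rule endo_inj_surj[OF _ _ calculation]) (auto intro: unitU_power)
  ultimately show ?thesis
    by (simp add: bij_betw_def)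
qed

end

section \<open>A generator of the unit circle\<close>

locale gf_q_squared_cyclic = gf_q_squared m for m +
  fixes \<xi> :: "'a::{field,finite}"
  assumes xi_in_unitU: "\<xi> \<in> unitU m"
    and unitU_generated: "\<forall>x\<in>unitU m. \<exists>j::nat. x = \<xi> ^ j"
begin

lemma xi_power_mod: "\<xi> ^ j = \<xi> ^ (j mod (q + 1))"
proof -
  have "\<xi> ^ j = (\<xi> ^ (q + 1)) ^ (j div (q + 1)) * \<xi> ^ (j mod (q + 1))"
    by (simp only: power_add[symmetric] power_mult[symmetric] mult_div_mod_eq)
  thus ?thesis
    using xi_in_unitU by (simp add: mem_unitU_iff)
qed

lemma unitU_eq_image_xi: "unitU m = (\<lambda>j. \<xi> ^ j) ` {..<q + 1}"
proof
  show "(\<lambda>j. \<xi> ^ j) ` {..<q + 1} \<subseteq> unitU m"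
    using xi_in_unitU unitU_power by auto
  show "unitU m \<subseteq> (\<lambda>j. \<xi> ^ j) ` {..<q + 1}"
    using unitU_generated xi_power_mod by fastforce
qed

lemma inj_on_xi_power: "inj_on (\<lambda>j. \<xi> ^ j) {..<q + 1}"
  by (rule eq_card_imp_inj_on) (use unitU_eq_image_xi card_unitU in auto)

lemma sum_unitU_eq_sum_xi_power: "(\<Sum>x\<in>unitU m. h x) = (\<Sum>j<q + 1. h (\<xi> ^ j))"
  unfolding unitU_eq_image_xi by (rule sum.reindex[OF inj_on_xi_power, unfolded comp_def])

lemma inj_on_xi_power_mult:
  assumes "q + 1 = d * N"
  shows "inj_on (\<lambda>j. \<xi> ^ (d * j)) {..<N}"
proof (rule inj_onI)
  fix i j assume ij: "i \<in> {..<N}" "j \<in> {..<N}" and eq: "\<xi> ^ (d * i) = \<xi> ^ (d * j)"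
  have "d > 0"
    using assms by (cases d) auto
  hence "d * i < q + 1" "d * j < q + 1"
    using assms ij by simp_all
  hence "d * i = d * j"
    using inj_onD[OF inj_on_xi_power eq] by simp
  thus "i = j"
    using \<open>d > 0\<close> by simp
qed

lemma roots_of_unity_unitU:
  assumes "q + 1 = r * N"
  shows "{x \<in> unitU m. x ^ r = 1} = (\<lambda>i. \<xi> ^ (N * i)) ` {..<r}"
proof
  show "(\<lambda>i. \<xi> ^ (N * i)) ` {..<r} \<subseteq> {x \<in> unitU m. x ^ r = 1}"
  proof (rule image_subsetI)
    fix i
    have "N * i * r = (q + 1) * i"
      using assms by (simp add: mult_ac)
    hence "(\<xi> ^ (N * i)) ^ r = (\<xi> ^ (q + 1)) ^ i"
      by (simp only: power_mult[symmetric])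
    thus "\<xi> ^ (N * i) \<in> {x \<in> unitU m. x ^ r = 1}"
      using xi_in_unitU unitU_power by (simp add: mem_unitU_iff)
  qed
  show "{x \<in> unitU m. x ^ r = 1} \<subseteq> (\<lambda>i. \<xi> ^ (N * i)) ` {..<r}"
  proof clarify
    fix x :: 'a assume x: "x \<in> unitU m" "x ^ r = 1"
    then obtain j where j: "j < q + 1" "x = \<xi> ^ j"
      using unitU_eq_image_xi by auto
    have "r > 0" "N > 0"
      using assms by (auto intro: gr0I)
    have "\<xi> ^ ((j * r) mod (q + 1)) = \<xi> ^ 0"
      using x j xi_power_mod[of "j * r"] by (simp add: power_mult)
    hence "(j * r) mod (q + 1) = 0"
      using inj_onD[OF inj_on_xi_power] by simp
    hence "r * N dvd r * j"
      unfolding assms by (simp add: mult.commute dvd_eq_mod_eq_0)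
    hence "N dvd j"
      using \<open>r > 0\<close> by simp
    then obtain i where "j = N * i"
      by blast
    moreover have "i < r"
      using j(1) \<open>N > 0\<close> unfolding assms calculation by (simp add: mult.commute)
    ultimately show "x \<in> (\<lambda>i. \<xi> ^ (N * i)) ` {..<r}"
      using j by auto
  qed
qed

lemma card_roots_of_unity_unitU:
  assumes "r dvd q + 1"
  shows "card {x \<in> unitU m. (x::'a) ^ r = 1} = r"
proof -
  obtain N where N: "q + 1 = r * N"
    using assms by blast
  hence "inj_on (\<lambda>i. \<xi> ^ (N * i)) {..<r}"
    by (intro inj_on_xi_power_mult) (simp add: mult.commute)
  thus ?thesis
    unfolding roots_of_unity_unitU[OF N] by (simp add: card_image)
qed

lemma sum_chi_fun_f_unitU:
  assumes "r > 0" "r dvd q + 1"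
  shows "(\<Sum>u\<in>unitU m. chi (fun_f m r s (a::'a) u)) = int r
           + (\<Sum>x\<in>unitU m. chi (tr (2 * m) (a * x powi s)))
           - (\<Sum>x\<in>{x \<in> unitU m. x ^ r = 1}. chi (tr (2 * m) (a * x powi s)))"
proof -
  let ?R = "{x \<in> unitU m. (x::'a) ^ r = 1}"
  let ?h = "\<lambda>x. chi (tr (2 * m) (a * x powi s))"
  have "(\<Sum>u\<in>unitU m. chi (fun_f m r s a u))
      = (\<Sum>u\<in>unitU m. chi (if (u ^ (q - 1)) ^ r = 1 then 0 else tr (2 * m) (a * (u ^ (q - 1)) powi s)))"
    by (intro sum.cong refl) (simp add: fun_f_unitU[OF _ assms])
  also have "\<dots> = (\<Sum>w\<in>unitU m. chi (if w ^ r = 1 then 0 else tr (2 * m) (a * w powi s)))"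
    by (rule sum.reindex_bij_betw[OF bij_betw_power_q_minus_1])
  also have "\<dots> = (\<Sum>w\<in>unitU m - ?R. ?h w) + (\<Sum>w\<in>?R. 1)"
    by (subst sum.subset_diff[of ?R]) auto
  also have "(\<Sum>w\<in>unitU m - ?R. ?h w) = (\<Sum>w\<in>unitU m. ?h w) - (\<Sum>w\<in>?R. ?h w)"
    by (subst sum_diff) auto
  also have "(\<Sum>w\<in>?R. 1::int) = int r"
    using card_roots_of_unity_unitU[OF assms(2)] by simp
  finally show ?thesis
    by simp
qed

lemma bent_fun_f_iff:
  assumes "r > 0" "r dvd q + 1"
  shows "bent (2 * m) (fun_f m r s (a::'a)) \<longleftrightarrow>
    (\<Sum>x\<in>unitU m. chi (tr (2 * m) (a * x powi s)))
      = (\<Sum>x\<in>{x \<in> unitU m. x ^ r = 1}. chi (tr (2 * m) (a * x powi s))) + 1 - int r"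
proof -
  have "fun_f m r s a 1 = 0"
    using fun_f_unitU[OF one_in_unitU assms, of s a] by simp
  hence "bent (2 * m) (fun_f m r s a) \<longleftrightarrow> (\<Sum>u\<in>unitU m. chi (fun_f m r s a u)) = 1"
    by (intro bent_iff_sum_chi_unitU_eq_1 fun_f_boolean fun_f_mult_subF) (simp_all add: fun_f_def)
  thus ?thesis
    unfolding sum_chi_fun_f_unitU[OF assms] by linarith
qed

lemma xi_powi_mult:
  assumes "q + 1 = d * N"
  shows "\<xi> powi (int d * X) = \<xi> ^ (d * nat (X mod int N))"
proof -
  have "(int d * X) mod int (q + 1) = int d * (X mod int N)"
    unfolding assms by (simp add: mod_mult_mult1)
  moreover have "nat (int d * (X mod int N)) = d * nat (X mod int N)"
    by (simp add: nat_mult_distrib)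
  ultimately show ?thesis
    using powi_unitU[OF xi_in_unitU] by simp
qed

text \<open>As \<open>x\<close> runs over \<open>unitU m\<close>, \<open>x powi s\<close> runs \<open>d\<close> times over the subgroup of
  \<open>d\<close>-th powers, which also contains \<open>\<xi> ^ (k * d)\<close>.\<close>

lemma sum_chi_tr_powi_unitU:
  assumes d: "d = nat (gcd s (2 ^ m + 1))" and a: "a = b * \<xi> ^ (k * d)"
  shows "(\<Sum>x\<in>unitU m. chi (tr (2 * m) (a * x powi s)))
     = int d * (\<Sum>x\<in>{\<xi> ^ (d * j) | j. j < (q + 1) div d}. chi (tr (2 * m) (b * x)))"
proof -
  define N where "N = (q + 1) div d"
  define H where "H i = chi (tr (2 * m) (b * \<xi> ^ (d * i)))" for i
  have "d = nat (gcd s (int (q + 1)))"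
    using d by (simp add: add.commute)
  then obtain s' where qdN: "q + 1 = d * N" and s': "s = int d * s'" and "coprime s' (int N)"
    unfolding N_def by (rule gcd_coprime_decomposition[OF zero_less_Suc[of q, unfolded Suc_eq_plus1]])
  have "a * (\<xi> ^ j) powi s = b * \<xi> ^ (d * nat ((int k + int j * s') mod int N))" for j
  proof -
    have "a * (\<xi> ^ j) powi s = b * \<xi> powi (int d * (int k + int j * s'))"
      using xi_in_unitU unitU_nonzero
      by (simp add: a s' power_int_add algebra_simps flip: power_int_of_nat power_int_mult)
    thus ?thesis
      using xi_powi_mult[OF qdN] by simp
  qed
  hence "(\<Sum>x\<in>unitU m. chi (tr (2 * m) (a * x powi s)))
      = (\<Sum>j<d * N. H (nat ((int k + int j * s') mod int N)))"
    unfolding sum_unitU_eq_sum_xi_power qdN by (simp add: H_def)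
  also have "\<dots> = int d * (\<Sum>i<N. H i)"
    by (rule sum_affine_mod[OF \<open>coprime s' (int N)\<close>])
  also have "(\<Sum>i<N. H i) = (\<Sum>x\<in>{\<xi> ^ (d * j) | j. j < N}. chi (tr (2 * m) (b * x)))"
  proof -
    have "{\<xi> ^ (d * j) | j. j < N} = (\<lambda>j. \<xi> ^ (d * j)) ` {..<N}"
      by auto
    thus ?thesis
      using sum.reindex[OF inj_on_xi_power_mult[OF qdN], of "\<lambda>x. chi (tr (2 * m) (b * x))"]
      by (simp add: H_def)
  qed
  finally show ?thesis
    by (simp add: N_def)
qed

lemma bent_fun_f_iff_kloosterman:
  assumes "r > 0" "r dvd q + 1" "coprime s (2 ^ m + 1)"
    and "b \<in> subF m" "b \<noteq> 0" "c \<in> unitU m"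
  shows "bent (2 * m) (fun_f m r s (b * c :: 'a)) \<longleftrightarrow>
    kloosterman m b = int r - (\<Sum>x\<in>{x \<in> unitU m. x ^ r = 1}. chi (tr (2 * m) (b * c * x)))"
proof -
  let ?R = "{x \<in> unitU m. (x::'a) ^ r = 1}"
  let ?h = "\<lambda>x. chi (tr (2 * m) (b * c * x))"
  have "x powi s \<in> ?R" if "x \<in> ?R" for x
  proof -
    have "(x powi s) ^ r = (x ^ r) powi s"
      by (simp add: power_int_power' power_int_power mult.commute)
    thus ?thesis
      using that unitU_powi[of x s] by simp
  qed
  hence sum_R: "(\<Sum>x\<in>?R. ?h (x powi s)) = (\<Sum>x\<in>?R. ?h x)"
    by (intro sum_powi_coprime[OF assms(3)]) auto
  have "(\<Sum>x\<in>unitU m. ?h (x powi s)) = (\<Sum>x\<in>unitU m. ?h x)"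
    by (rule sum_powi_coprime[OF assms(3) subset_refl unitU_powi])
  also have "\<dots> = (\<Sum>x\<in>unitU m. chi (tr (2 * m) (b * x)))"
    using sum_unitU_mult[OF assms(6), of "\<lambda>x. chi (tr (2 * m) (b * x))"] by (simp add: mult.assoc)
  also have "\<dots> = 1 - kloosterman m b"
    by (rule sum_chi_tr_unitU[OF assms(4,5)])
  finally have sum_U: "(\<Sum>x\<in>unitU m. ?h (x powi s)) = 1 - kloosterman m b" .
  show ?thesis
    unfolding bent_fun_f_iff[OF assms(1,2)] sum_R sum_U by linarith
qed

lemma bent_fun_f_iff_gcd:
  assumes "r > 0" "r dvd q + 1" "d = nat (gcd s (2 ^ m + 1))" "a = b * \<xi> ^ (k * d)"
  shows "bent (2 * m) (fun_f m r s a) \<longleftrightarrow>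
    int d * (\<Sum>x\<in>{\<xi> ^ (d * j) | j. j < (q + 1) div d}. chi (tr (2 * m) (b * x)))
      = (\<Sum>x\<in>{x \<in> unitU m. x ^ r = 1}. chi (tr (2 * m) (a * x powi s))) + 1 - int r"
  unfolding bent_fun_f_iff[OF assms(1,2)] sum_chi_tr_powi_unitU[OF assms(3,4)] ..

end

theorem theorem4:
  fixes m r :: nat and s :: int and a \<xi> :: "'a::{field,finite}"
  assumes m_pos: "m > 0"
    and card: "card (UNIV :: 'a set) = 2 ^ (2 * m)"
    and r_pos: "r > 0" and r_dvd: "r dvd 2 ^ m + 1"
    and a_nz: "a \<noteq> 0"
    and xi_U: "\<xi> \<in> unitU m"
    and xi_gen: "\<forall>x\<in>unitU m. \<exists>j::nat. x = \<xi> ^ j"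
  shows
    "(\<forall>ab (k::nat). gcd s (2 ^ m + 1) = 1 \<and> ab \<in> subF m \<and> ab \<noteq> 0 \<and> k \<le> 2 ^ m
        \<and> a = ab * \<xi> ^ k \<longrightarrow>
        (bent (2 * m) (fun_f m r s a) \<longleftrightarrow>
          kloosterman m ab = int r - (\<Sum>x\<in>{x\<in>unitU m. x ^ r = 1}. chi (tr (2 * m) (a * x)))))
     \<and>
     (\<forall>d ab (k::nat). d = nat (gcd s (2 ^ m + 1)) \<and> ab \<in> subF m \<and> ab \<noteq> 0
        \<and> k < (2 ^ m + 1) div d \<and> a = ab * \<xi> ^ (k * d) \<longrightarrow>
        (bent (2 * m) (fun_f m r s a) \<longleftrightarrow>
          int d * (\<Sum>x\<in>{\<xi> ^ (d * j) | j. j < (2 ^ m + 1) div d}. chi (tr (2 * m) (ab * x)))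
          = (\<Sum>x\<in>{x\<in>unitU m. x ^ r = 1}. chi (tr (2 * m) (a * x powi s))) + 1 - int r))"
proof -
  interpret gf_q_squared_cyclic m \<xi>
    using m_pos card xi_U xi_gen by unfold_locales
  show ?thesis
  proof (intro conjI allI impI; elim conjE)
    fix b and k :: nat
    assume "gcd s (2 ^ m + 1) = 1" "b \<in> subF m" "b \<noteq> 0" "a = b * \<xi> ^ k"
    thus "bent (2 * m) (fun_f m r s a) \<longleftrightarrow>
        kloosterman m b = int r - (\<Sum>x\<in>{x \<in> unitU m. x ^ r = 1}. chi (tr (2 * m) (a * x)))"
      using bent_fun_f_iff_kloosterman[OF r_pos r_dvd _ _ _ unitU_power[OF xi_in_unitU]]
      by (simp add: coprime_iff_gcd_eq_1)
  next
    fix d b and k :: nat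
    assume "d = nat (gcd s (2 ^ m + 1))" "a = b * \<xi> ^ (k * d)"
    thus "bent (2 * m) (fun_f m r s a) \<longleftrightarrow>
        int d * (\<Sum>x\<in>{\<xi> ^ (d * j) | j. j < (2 ^ m + 1) div d}. chi (tr (2 * m) (b * x)))
          = (\<Sum>x\<in>{x \<in> unitU m. x ^ r = 1}. chi (tr (2 * m) (a * x powi s))) + 1 - int r"
      by (rule bent_fun_f_iff_gcd[OF r_pos r_dvd])
  qed
qed

end
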